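(* Let $c>0$ be a constant. Let $G=(V,E,L)$ be a graph with loops and suppose $V^+:=\{i\in V:\{i,i\}\in L^+\}\subseteq S$, where $S$ is a stable set of $(V,E)$ with $|V\setminus S|\le c\log|V|$. Then $\mathrm{QP}(G)$ has an SOC-representable formulation whose numbers of variables and constraints are bounded by a polynomial in $|V|$ (whose degree depends only on $c$).
   Context: A graph with loops is $G=(V,E,L)$: $V$ finite node set, $E$ a set of unordered pairs of distinct nodes, $L$ a set of loops $\{i,i\}$ partitioned as $L=L^-\cup L^+$ (minus/plus loops). $\mathrm{QP}(G):=\mathrm{conv}\{z\in\mathbb{R}^{V\cup E\cup L}: z_{ii}\ge z_i^2\ \forall\{i,i\}\in L^+,\ z_{ii}\le z_i^2\ \forall \{i,i\}\in L^-,\ z_{ij}=z_iz_j\ \forall \{i,j\}\in E,\ z_i\in[0,1]\ \forall i\in V\}$. A convex set is SOC-representable if it is the projection of a set described by finitely many linear constraints and (rotated) second-order cone constraints composed with affine maps. *)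

theory Defs
  imports "HOL-Analysis.Analysis" "HOL-Computational_Algebra.Polynomial"
begin

definition conv_fun :: "('i \<Rightarrow> real) set \<Rightarrow> ('i \<Rightarrow> real) set" where
  "conv_fun X = {y. \<exists>(n::nat) (u::nat \<Rightarrow> real) (x::nat \<Rightarrow> ('i \<Rightarrow> real)).
      (\<forall>k<n. 0 \<le> u k \<and> x k \<in> X) \<and> (\<Sum>k<n. u k) = 1 \<and>
      y = (\<lambda>i. \<Sum>k<n. u k * x k i)}"

text \<open>The original variables are indexed by a finite set I (points are functions
 vanishing outside I); there are p auxiliary variables w 0, ..., w (p-1).
 An affine form is given by coefficients on x, coefficients on w, and a constant.\<close>

type_synonym 'i affform = "('i \<Rightarrow> real) \<times> (nat \<Rightarrow> real) \<times> real"

definition aff_eval :: "'i set \<Rightarrow> nat \<Rightarrow> 'i affform \<Rightarrow> ('i \<Rightarrow> real) \<Rightarrow> (nat \<Rightarrow> real) \<Rightarrow> real" where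
  "aff_eval I p f x w = (case f of (a, b, c) \<Rightarrow> (\<Sum>i\<in>I. a i * x i) + (\<Sum>j<p. b j * w j) + c)"

datatype 'i soc_constr =
    LinIneq "'i affform"
  | SOC "'i affform list" "'i affform"
  | RSOC "'i affform list" "'i affform" "'i affform"

fun soc_sat :: "'i set \<Rightarrow> nat \<Rightarrow> 'i soc_constr \<Rightarrow> ('i \<Rightarrow> real) \<Rightarrow> (nat \<Rightarrow> real) \<Rightarrow> bool" where
  "soc_sat I p (LinIneq f) x w = (0 \<le> aff_eval I p f x w)"
| "soc_sat I p (SOC gs t) x w =
     (sqrt (\<Sum>g\<leftarrow>gs. (aff_eval I p g x w)\<^sup>2) \<le> aff_eval I p t x w)"
| "soc_sat I p (RSOC gs u v) x w =
     ((\<Sum>g\<leftarrow>gs. (aff_eval I p g x w)\<^sup>2) \<le> 2 * aff_eval I p u x w * aff_eval I p v x w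
      \<and> 0 \<le> aff_eval I p u x w \<and> 0 \<le> aff_eval I p v x w)"

definition soc_rep :: "'i set \<Rightarrow> nat \<Rightarrow> nat \<Rightarrow> ('i \<Rightarrow> real) set \<Rightarrow> bool" where
  "soc_rep I nv nc X \<longleftrightarrow> (\<exists>(p::nat) (cs::'i soc_constr list).
      card I + p \<le> nv \<and> length cs \<le> nc \<and>
      X = {x. (\<forall>k. k \<notin> I \<longrightarrow> x k = 0) \<and>
              (\<exists>w. \<forall>con\<in>set cs. soc_sat I p con x w)})"

text \<open>Nodes V, edges E (unordered pairs of distinct nodes), minus loops Lm and
 plus loops Lp (loops {i,i}, which as HOL sets equal {i}).\<close>

definition graph_with_loops :: "'a set \<Rightarrow> 'a set set \<Rightarrow> 'a set set \<Rightarrow> 'a set set \<Rightarrow> bool" where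
  "graph_with_loops V E Lm Lp \<longleftrightarrow> finite V \<and>
     (\<forall>e\<in>E. \<exists>i j. i \<in> V \<and> j \<in> V \<and> i \<noteq> j \<and> e = {i, j}) \<and>
     (\<forall>l\<in>Lm \<union> Lp. \<exists>i\<in>V. l = {i, i}) \<and> Lm \<inter> Lp = {}"

definition stable_set :: "'a set \<Rightarrow> 'a set set \<Rightarrow> 'a set \<Rightarrow> bool" where
  "stable_set V E S \<longleftrightarrow> S \<subseteq> V \<and> (\<forall>i\<in>S. \<forall>j\<in>S. {i, j} \<notin> E)"

datatype 'a coord = Node 'a | Pair "'a set"

definition QP_index :: "'a set \<Rightarrow> 'a set set \<Rightarrow> 'a set set \<Rightarrow> 'a set set \<Rightarrow> 'a coord set" where
  "QP_index V E Lm Lp = Node ` V \<union> Pair ` (E \<union> Lm \<union> Lp)"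

definition QP :: "'a set \<Rightarrow> 'a set set \<Rightarrow> 'a set set \<Rightarrow> 'a set set \<Rightarrow> ('a coord \<Rightarrow> real) set" where
  "QP V E Lm Lp = conv_fun {z. (\<forall>k. k \<notin> QP_index V E Lm Lp \<longrightarrow> z k = 0) \<and>
      (\<forall>i. {i, i} \<in> Lp \<longrightarrow> z (Pair {i, i}) \<ge> (z (Node i))\<^sup>2) \<and>
      (\<forall>i. {i, i} \<in> Lm \<longrightarrow> z (Pair {i, i}) \<le> (z (Node i))\<^sup>2) \<and>
      (\<forall>i j. {i, j} \<in> E \<longrightarrow> z (Pair {i, j}) = z (Node i) * z (Node j)) \<and>
      (\<forall>i\<in>V. 0 \<le> z (Node i) \<and> z (Node i) \<le> 1)}"

end

theory Submission
  imports Defs "HOL-Library.Function_Algebras"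
begin

(* A minus-loop condition z_ii <= z_i^2 is equivalent to the linear z_ii <= z_i when z_i is
   0 or 1. After this relaxation, a fractional node outside S or with a minus loop can be
   split into the values 0 and 1 (the incident edge variables scale along), so QP(G) is the
   convex hull of the relaxed points that are binary on T = V - S. Fixing the nodes of T to
   the indicator of A <= T leaves a convex piece: S is stable, so every edge variable becomes
   a constant or a node variable of S, and the plus loops, all in S, give rotated cones
   z_i^2 <= z_ii. Balas' disjunctive formulation of the hull of the 2^|T| pieces is an SOC
   formulation of size O(2^|T| |V|^2), and |T| <= c ln |V| gives 2^|T| <= |V|^ceil(c ln 2) + 1. *)

instantiation "fun" :: (type, real_vector) real_vector
begin

definition scaleR_fun :: "real \<Rightarrow> ('a \<Rightarrow> 'b) \<Rightarrow> 'a \<Rightarrow> 'b" where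
  "scaleR_fun r f = (\<lambda>x. r *\<^sub>R f x)"

instance
  by standard (simp_all add: scaleR_fun_def fun_eq_iff scaleR_add_right scaleR_add_left)

end

lemma scaleR_fun_apply [simp]: "(r *\<^sub>R f) x = r *\<^sub>R f x"
  by (simp add: scaleR_fun_def)

lemma sum_fun_apply [simp]: "(\<Sum>a\<in>A. f a) x = (\<Sum>a\<in>A. f a x)"
  by (induction A rule: infinite_finite_induct) simp_all

lemma conv_fun_eq_convex_hull: "conv_fun X = convex hull X"
proof
  show "conv_fun X \<subseteq> convex hull X"
  proof
    fix y assume "y \<in> conv_fun X"
    then obtain n :: nat and u :: "nat \<Rightarrow> real" and x
      where ux: "\<forall>k<n. 0 \<le> u k \<and> x k \<in> X" "(\<Sum>k<n. u k) = 1"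
        and y: "y = (\<lambda>i. \<Sum>k<n. u k * x k i)"
      unfolding conv_fun_def mem_Collect_eq by (elim exE conjE) blast
    have "y = (\<Sum>k<n. u k *\<^sub>R x k)"
      unfolding y by (rule ext) simp
    also have "\<dots> \<in> convex hull X"
      by (rule convex_sum) (use ux in \<open>auto intro: hull_inc\<close>)
    finally show "y \<in> convex hull X" .
  qed
next
  show "convex hull X \<subseteq> conv_fun X"
  proof
    fix y assume "y \<in> convex hull X"
    then obtain F u where F: "finite F" "F \<subseteq> X" "\<forall>x\<in>F. 0 \<le> u x" "sum u F = 1"
      and y: "(\<Sum>x\<in>F. u x *\<^sub>R x) = y"
      unfolding convex_hull_explicit mem_Collect_eq by blast
    obtain h where h: "bij_betw h {0..<card F} F"
      using ex_bij_betw_nat_finite[OF F(1)] by blast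
    have reindex: "(\<Sum>k<card F. g (h k)) = (\<Sum>x\<in>F. g x)" for g :: "_ \<Rightarrow> real"
      using sum.reindex_bij_betw[OF h, of g] by (simp add: atLeast0LessThan)
    have "\<forall>k<card F. 0 \<le> u (h k) \<and> h k \<in> X"
      using h F(2,3) by (auto simp: bij_betw_def)
    moreover have "(\<Sum>k<card F. u (h k)) = 1"
      using F(4) by (simp add: reindex)
    moreover have "y = (\<lambda>i. \<Sum>k<card F. u (h k) * h k i)"
    proof
      fix i
      show "y i = (\<Sum>k<card F. u (h k) * h k i)"
        unfolding y[symmetric] sum_fun_apply scaleR_fun_apply real_scaleR_def
        using reindex[of "\<lambda>x. u x * x i"] by simp
    qed
    ultimately show "y \<in> conv_fun X"
      unfolding conv_fun_def mem_Collect_eq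
      by (intro exI[of _ "card F"] exI[of _ "u \<circ> h"] exI[of _ h]) simp
  qed
qed

lemma conic_comb_mono:
  fixes x1 x2 y1 y2 a b :: real
  assumes "x1 \<le> y1" "x2 \<le> y2" "0 \<le> a" "0 \<le> b"
  shows "a * x1 + b * x2 \<le> a * y1 + b * y2"
  using assms by (intro add_mono mult_left_mono)

lemma rotated_cone_conic_comb:
  fixes x1 x2 l1 l2 s1 s2 u v :: real
  assumes h1: "x1\<^sup>2 \<le> l1 * s1" and h2: "x2\<^sup>2 \<le> l2 * s2"
    and nonneg: "0 \<le> l1" "0 \<le> s1" "0 \<le> l2" "0 \<le> s2" "0 \<le> u" "0 \<le> v"
  shows "(u * x1 + v * x2)\<^sup>2 \<le> (u * l1 + v * l2) * (u * s1 + v * s2)"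
proof -
  have "(x1 * x2)\<^sup>2 \<le> (l1 * s2) * (l2 * s1)"
    using mult_mono[OF h1 h2] nonneg by (simp add: algebra_simps)
  also have "\<dots> \<le> ((l1 * s2 + l2 * s1) / 2)\<^sup>2"
    using sum_squares_ge_zero[of "l1 * s2 - l2 * s1" 0] by (simp add: power2_eq_square algebra_simps)
  finally have "x1 * x2 \<le> (l1 * s2 + l2 * s1) / 2"
    by (rule power2_le_imp_le) (use nonneg in simp)
  then have "2 * (x1 * x2) \<le> l1 * s2 + l2 * s1"
    by simp
  then have "(u * v) * (2 * (x1 * x2)) \<le> (u * v) * (l1 * s2 + l2 * s1)"
    using nonneg by (intro mult_left_mono) auto
  moreover have "u\<^sup>2 * x1\<^sup>2 \<le> u\<^sup>2 * (l1 * s1)" "v\<^sup>2 * x2\<^sup>2 \<le> v\<^sup>2 * (l2 * s2)"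
    using h1 h2 by (simp_all add: mult_left_mono)
  ultimately show ?thesis
    by (simp add: power2_eq_square algebra_simps)
qed

section \<open>Affine forms and cone constraints\<close>

definition aff_var :: "'i \<Rightarrow> 'i affform" where
  "aff_var k = (\<lambda>i. if i = k then 1 else 0, \<lambda>_. 0, 0)"

definition aff_aux :: "nat \<Rightarrow> 'i affform" where
  "aff_aux j = (\<lambda>_. 0, \<lambda>t. if t = j then 1 else 0, 0)"

definition aff_const :: "real \<Rightarrow> 'i affform" where
  "aff_const r = (\<lambda>_. 0, \<lambda>_. 0, r)"

definition aff_scale :: "real \<Rightarrow> 'i affform \<Rightarrow> 'i affform" where
  "aff_scale r f = (\<lambda>i. r * fst f i, \<lambda>j. r * fst (snd f) j, r * snd (snd f))"

definition aff_diff :: "'i affform \<Rightarrow> 'i affform \<Rightarrow> 'i affform" where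
  "aff_diff f g =
    (\<lambda>i. fst f i - fst g i, \<lambda>j. fst (snd f) j - fst (snd g) j, snd (snd f) - snd (snd g))"

definition aff_sum :: "('s \<Rightarrow> 'i affform) \<Rightarrow> 's set \<Rightarrow> 'i affform" where
  "aff_sum G F = (\<lambda>i. \<Sum>s\<in>F. fst (G s) i, \<lambda>j. \<Sum>s\<in>F. fst (snd (G s)) j, \<Sum>s\<in>F. snd (snd (G s)))"

lemma aff_eval_split:
  "aff_eval I p f x w = (\<Sum>i\<in>I. fst f i * x i) + (\<Sum>j<p. fst (snd f) j * w j) + snd (snd f)"
  by (cases f) (simp add: aff_eval_def)

lemma aff_eval_var: "finite I \<Longrightarrow> k \<in> I \<Longrightarrow> aff_eval I p (aff_var k) x w = x k"
  by (simp add: aff_eval_split aff_var_def if_distrib[of "\<lambda>c. c * _"] sum.delta' cong: if_cong)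

lemma aff_eval_aux: "j < p \<Longrightarrow> aff_eval I p (aff_aux j) x w = w j"
  by (simp add: aff_eval_split aff_aux_def if_distrib[of "\<lambda>c. c * _"] sum.delta' cong: if_cong)

lemma aff_eval_const [simp]: "aff_eval I p (aff_const r) x w = r"
  by (simp add: aff_eval_split aff_const_def)

lemma aff_eval_scale [simp]: "aff_eval I p (aff_scale r f) x w = r * aff_eval I p f x w"
  by (simp add: aff_eval_split aff_scale_def sum_distrib_left algebra_simps)

lemma aff_eval_diff [simp]:
  "aff_eval I p (aff_diff f g) x w = aff_eval I p f x w - aff_eval I p g x w"
  by (simp add: aff_eval_split aff_diff_def sum_subtractf algebra_simps)

lemma aff_eval_sum [simp]: "aff_eval I p (aff_sum G F) x w = (\<Sum>s\<in>F. aff_eval I p (G s) x w)"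
  by (simp add: aff_eval_split aff_sum_def sum_distrib_right sum.distrib sum.swap[of _ F])

definition le_constrs :: "'i affform \<Rightarrow> 'i affform \<Rightarrow> 'i soc_constr list" where
  "le_constrs f g = [LinIneq (aff_diff g f)]"

definition eq_constrs :: "'i affform \<Rightarrow> 'i affform \<Rightarrow> 'i soc_constr list" where
  "eq_constrs f g = le_constrs f g @ le_constrs g f"

lemma soc_sat_le_constrs [simp]:
  "(\<forall>c\<in>set (le_constrs f g). soc_sat I p c x w) \<longleftrightarrow> aff_eval I p f x w \<le> aff_eval I p g x w"
  by (simp add: le_constrs_def)

lemma soc_sat_eq_constrs [simp]:
  "(\<forall>c\<in>set (eq_constrs f g). soc_sat I p c x w) \<longleftrightarrow> aff_eval I p f x w = aff_eval I p g x w"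
  by (auto simp: eq_constrs_def le_constrs_def)

lemma soc_rep_mono:
  assumes "soc_rep I nv nc X" "nv \<le> nv'" "nc \<le> nc'"
  shows "soc_rep I nv' nc' X"
proof -
  obtain p cs where "card I + p \<le> nv" "length cs \<le> nc"
    "X = {x. (\<forall>k. k \<notin> I \<longrightarrow> x k = 0) \<and> (\<exists>w. \<forall>con\<in>set cs. soc_sat I p con x w)}"
    using assms(1) unfolding soc_rep_def by blast
  then show ?thesis
    unfolding soc_rep_def using assms(2,3) by (intro exI[of _ p] exI[of _ cs]) simp
qed

definition enum_list :: "'x set \<Rightarrow> 'x list" where
  "enum_list X = (SOME xs. set xs = X \<and> distinct xs)"

lemma enum_list: "finite X \<Longrightarrow> set (enum_list X) = X \<and> length (enum_list X) = card X"
  unfolding enum_list_def using finite_distinct_list[of X]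
  by (metis (mono_tags, lifting) distinct_card someI_ex)

lemma sum_list_le_const:
  fixes f :: "'x \<Rightarrow> nat"
  shows "(\<And>x. x \<in> set xs \<Longrightarrow> f x \<le> c) \<Longrightarrow> sum_list (map f xs) \<le> length xs * c"
  by (induction xs) (auto simp: add_mono)

definition QP_points :: "'a set \<Rightarrow> 'a set set \<Rightarrow> 'a set set \<Rightarrow> 'a set set \<Rightarrow> ('a coord \<Rightarrow> real) set" where
  "QP_points V E Lm Lp = {z. (\<forall>k. k \<notin> QP_index V E Lm Lp \<longrightarrow> z k = 0) \<and>
      (\<forall>i. {i, i} \<in> Lp \<longrightarrow> z (Pair {i, i}) \<ge> (z (Node i))\<^sup>2) \<and>
      (\<forall>i. {i, i} \<in> Lm \<longrightarrow> z (Pair {i, i}) \<le> (z (Node i))\<^sup>2) \<and>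
      (\<forall>i j. {i, j} \<in> E \<longrightarrow> z (Pair {i, j}) = z (Node i) * z (Node j)) \<and>
      (\<forall>i\<in>V. 0 \<le> z (Node i) \<and> z (Node i) \<le> 1)}"

lemma QP_eq_convex_hull: "QP V E Lm Lp = convex hull QP_points V E Lm Lp"
  unfolding QP_def QP_points_def conv_fun_eq_convex_hull ..

lemma card_QP_index_le:
  assumes "graph_with_loops V E Lm Lp"
  shows "card (QP_index V E Lm Lp) \<le> card V * card V + 2 * card V"
proof -
  have fin: "finite V" using assms by (simp add: graph_with_loops_def)
  have E: "E \<subseteq> (\<lambda>(i, j). {i, j}) ` (V \<times> V)"
  proof
    fix e assume "e \<in> E"
    with assms obtain i j where "i \<in> V" "j \<in> V" "e = {i, j}"
      unfolding graph_with_loops_def by blast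
    then show "e \<in> (\<lambda>(i, j). {i, j}) ` (V \<times> V)" by force
  qed
  have L: "Lm \<union> Lp \<subseteq> (\<lambda>i. {i, i}) ` V"
    using assms unfolding graph_with_loops_def by blast
  have "card E \<le> card V * card V"
    using card_mono[OF _ E] card_image_le[of "V \<times> V" "\<lambda>(i, j). {i, j}"] fin
    by (simp add: card_cartesian_product)
  moreover have "card (Lm \<union> Lp) \<le> card V"
    using card_mono[OF _ L] card_image_le[of V "\<lambda>i. {i, i}"] fin by simp
  moreover have "finite E" "finite (Lm \<union> Lp)"
    using E L fin by (auto intro: finite_subset)
  ultimately have "card (E \<union> (Lm \<union> Lp)) \<le> card V * card V + card V"
    using card_Un_le[of E "Lm \<union> Lp"] by linarith
  then have "card (Pair ` (E \<union> Lm \<union> Lp)) \<le> card V * card V + card V"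
    using card_image_le[of "E \<union> Lm \<union> Lp" Pair] \<open>finite E\<close> \<open>finite (Lm \<union> Lp)\<close>
    by (simp add: Un_assoc)
  then show ?thesis
    unfolding QP_index_def
    using card_Un_le[of "Node ` V" "Pair ` (E \<union> Lm \<union> Lp)"] card_image_le[OF fin, of Node]
    by linarith
qed

locale qp_graph =
  fixes V :: "'a set" and E Lm Lp :: "'a set set" and S :: "'a set"
  assumes graph: "graph_with_loops V E Lm Lp"
    and stable: "stable_set V E S"
    and plus_loops_in_S: "{i\<in>V. {i, i} \<in> Lp} \<subseteq> S"
begin

definition I :: "'a coord set" where "I = QP_index V E Lm Lp"
definition T :: "'a set" where "T = V - S"

definition supported :: "('a coord \<Rightarrow> real) \<Rightarrow> bool" where
  "supported z \<longleftrightarrow> (\<forall>k. k \<notin> I \<longrightarrow> z k = 0)"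

lemma finite_V: "finite V"
  using graph by (simp add: graph_with_loops_def)

lemma finite_T: "finite T"
  using finite_V by (simp add: T_def)

lemma S_subset_V: "S \<subseteq> V"
  using stable by (simp add: stable_set_def)

lemma edgeE:
  assumes "e \<in> E"
  obtains i j where "i \<in> V" "j \<in> V" "i \<noteq> j" "e = {i, j}"
proof -
  have "\<forall>e\<in>E. \<exists>i j. i \<in> V \<and> j \<in> V \<and> i \<noteq> j \<and> e = {i, j}"
    using graph unfolding graph_with_loops_def by (elim conjE)
  then show thesis using assms that by blast
qed

lemma loopE:
  assumes "l \<in> Lm \<union> Lp"
  obtains i where "i \<in> V" "l = {i}"
proof -
  have "\<forall>l\<in>Lm \<union> Lp. \<exists>i\<in>V. l = {i}"
    using graph unfolding graph_with_loops_def insert_absorb2 by (elim conjE)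
  then show thesis using assms that by blast
qed

lemma edge_distinct: "{i, j} \<in> E \<Longrightarrow> i \<noteq> j"
  by (erule edgeE) (auto simp: doubleton_eq_iff)

lemma edge_in_V: "{i, j} \<in> E \<Longrightarrow> i \<in> V \<and> j \<in> V"
  by (erule edgeE) (auto simp: doubleton_eq_iff)

lemma loop_not_edge: "{i} \<notin> E"
proof
  assume "{i} \<in> E"
  then show False by (rule edgeE) (auto simp: doubleton_eq_iff)
qed

lemma loop_in_V: "{i} \<in> Lm \<union> Lp \<Longrightarrow> i \<in> V"
  by (erule loopE) simp

lemma minus_loop_not_plus: "{i} \<in> Lm \<Longrightarrow> {i} \<notin> Lp"
  using graph unfolding graph_with_loops_def by blast

lemma plus_loop_in_S: "{i} \<in> Lp \<Longrightarrow> i \<in> S"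
  using plus_loops_in_S loop_in_V by auto

lemma edge_not_loop: "e \<in> E \<Longrightarrow> e \<notin> Lm \<and> e \<notin> Lp"
  using loopE[of e] loop_not_edge by blast

lemma finite_I: "finite I"
proof -
  have "E \<subseteq> Pow V"
    by (auto elim!: edgeE)
  moreover have "Lm \<union> Lp \<subseteq> Pow V"
  proof
    fix l assume "l \<in> Lm \<union> Lp"
    then show "l \<in> Pow V" by (rule loopE) simp
  qed
  ultimately show ?thesis
    using finite_V by (auto simp: I_def QP_index_def intro: finite_subset)
qed

lemma Node_in_I: "Node i \<in> I \<longleftrightarrow> i \<in> V"
  by (auto simp: I_def QP_index_def)

lemma Pair_in_I: "Pair e \<in> I \<longleftrightarrow> e \<in> E \<union> Lm \<union> Lp"
  by (auto simp: I_def QP_index_def)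

lemma edge_through: "e \<in> E \<Longrightarrow> i \<in> e \<Longrightarrow> \<exists>j. e = {i, j}"
  by (erule edgeE) blast

lemma edge_cases:
  assumes "e \<in> E"
  obtains (TT) a b where "e = {a, b}" "a \<in> T" "b \<in> T" "e \<inter> S = {}"
  | (ST) a b where "e = {a, b}" "a \<in> S" "b \<in> T"
      "the_elem (e \<inter> S) = a" "the_elem (e - S) = b" "e \<inter> S \<noteq> {}"
proof -
  obtain a b where ab: "a \<in> V" "b \<in> V" "a \<noteq> b" "e = {a, b}"
    using assms by (rule edgeE)
  have "a \<notin> S \<or> b \<notin> S"
    using stable assms ab(4) by (auto simp: stable_set_def)
  then consider "a \<in> S" "b \<in> T" | "b \<in> S" "a \<in> T" | "a \<in> T" "b \<in> T"
    using ab(1,2) by (auto simp: T_def)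
  then show ?thesis
  proof cases
    case 1
    then have "e \<inter> S = {a}" "e - S = {b}"
      using ab(3,4) by (auto simp: T_def)
    then have "the_elem (e \<inter> S) = a" "the_elem (e - S) = b" "e \<inter> S \<noteq> {}"
      by simp_all
    then show ?thesis using ST 1 ab(4) by blast
  next
    case 2
    then have "e \<inter> S = {b}" "e - S = {a}" "e = {b, a}"
      using ab(3,4) by (auto simp: T_def)
    then have "the_elem (e \<inter> S) = b" "the_elem (e - S) = a" "e \<inter> S \<noteq> {}"
      by simp_all
    then show ?thesis using ST 2 \<open>e = {b, a}\<close> by blast
  next
    case 3
    then show ?thesis using TT[of a b] ab(4) by (auto simp: T_def)
  qed
qed

lemma Pair_cases:
  assumes "Pair e \<in> I"
  obtains (plus) i where "e = {i}" "e \<in> Lp" "i \<in> S" "i \<in> V"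
  | (minus) i where "e = {i}" "e \<in> Lm" "e \<notin> Lp" "i \<in> V"
  | (edge) "e \<in> E" "e \<notin> Lm" "e \<notin> Lp"
proof -
  consider "e \<in> E" | "e \<in> Lm" | "e \<in> Lp"
    using assms by (auto simp: Pair_in_I)
  then show ?thesis
  proof cases
    case 1
    then show ?thesis using edge edge_not_loop by blast
  next
    case 2
    then obtain i where "i \<in> V" "e = {i}" using loopE[of e] by blast
    then show ?thesis using minus 2 minus_loop_not_plus by blast
  next
    case 3
    then obtain i where "i \<in> V" "e = {i}" using loopE[of e] by blast
    then show ?thesis using plus 3 plus_loop_in_S by blast
  qed
qed

section \<open>Splitting fractional nodes\<close>

definition relaxed :: "('a coord \<Rightarrow> real) set" where
  "relaxed = {z. supported z \<and> (\<forall>i\<in>V. 0 \<le> z (Node i) \<and> z (Node i) \<le> 1) \<and>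
      (\<forall>i. {i} \<in> Lp \<longrightarrow> z (Pair {i}) \<ge> (z (Node i))\<^sup>2) \<and>
      (\<forall>i. {i} \<in> Lm \<longrightarrow> z (Pair {i}) \<le> z (Node i)) \<and>
      (\<forall>i j. {i, j} \<in> E \<longrightarrow> z (Pair {i, j}) = z (Node i) * z (Node j))}"

definition relaxed_binary :: "('a coord \<Rightarrow> real) set" where
  "relaxed_binary = relaxed \<inter> {z. \<forall>j\<in>T. z (Node j) = 0 \<or> z (Node j) = 1}"

definition fractional :: "('a coord \<Rightarrow> real) \<Rightarrow> 'a set" where
  "fractional z = {i\<in>V. 0 < z (Node i) \<and> z (Node i) < 1 \<and> (i \<notin> S \<or> {i} \<in> Lm)}"

lemma QP_points_subset_relaxed: "QP_points V E Lm Lp \<subseteq> relaxed"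
proof
  fix z assume z: "z \<in> QP_points V E Lm Lp"
  have "z (Pair {i}) \<le> z (Node i)" if "{i} \<in> Lm" for i
  proof -
    have "0 \<le> z (Node i)" "z (Node i) \<le> 1"
      using z loop_in_V[of i] that by (auto simp: QP_points_def)
    then have "(z (Node i))\<^sup>2 \<le> z (Node i)"
      by (simp add: power2_eq_square mult_left_le)
    moreover have "z (Pair {i}) \<le> (z (Node i))\<^sup>2"
      using z that by (auto simp: QP_points_def)
    ultimately show ?thesis by linarith
  qed
  then show "z \<in> relaxed"
    using z unfolding QP_points_def relaxed_def supported_def I_def by auto
qed

lemma relaxed_not_fractional:
  assumes "z \<in> relaxed" "fractional z = {}"
  shows "z \<in> QP_points V E Lm Lp \<inter> relaxed_binary"
proof -
  have binary: "z (Node i) = 0 \<or> z (Node i) = 1" if "i \<in> V" "i \<notin> S \<or> {i} \<in> Lm" for i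
    using assms that unfolding relaxed_def fractional_def by force
  have "z (Pair {i}) \<le> (z (Node i))\<^sup>2" if "{i} \<in> Lm" for i
  proof -
    have "(z (Node i))\<^sup>2 = z (Node i)"
      using binary[of i] loop_in_V[of i] that by auto
    then show ?thesis using assms that by (auto simp: relaxed_def)
  qed
  then have "z \<in> QP_points V E Lm Lp"
    using assms unfolding QP_points_def relaxed_def supported_def I_def by auto
  moreover have "z \<in> relaxed_binary"
    using assms binary unfolding relaxed_binary_def T_def by auto
  ultimately show ?thesis by simp
qed

text \<open>set_node z i a s is affine in (a, s), so z is the combination of its values at
  a = 1 and a = 0 with weights z_i and 1 - z_i.\<close>

definition set_node :: "('a coord \<Rightarrow> real) \<Rightarrow> 'a \<Rightarrow> real \<Rightarrow> real \<Rightarrow> 'a coord \<Rightarrow> real" where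
  "set_node z i a s k = (if k = Node i then a else if k = Pair {i} then s else
      (case k of Pair e \<Rightarrow> if e \<in> E \<and> i \<in> e then a * z (Node (the_elem (e - {i}))) else z k
        | Node j \<Rightarrow> z k))"

lemma set_node_Node: "set_node z i a s (Node j) = (if j = i then a else z (Node j))"
  by (simp add: set_node_def)

lemma set_node_loop: "set_node z i a s (Pair {j}) = (if j = i then s else z (Pair {j}))"
  using loop_not_edge by (simp add: set_node_def)

lemma set_node_edge:
  assumes "{p, q} \<in> E"
  shows "set_node z i a s (Pair {p, q}) =
    (if p = i then a * z (Node q) else if q = i then a * z (Node p) else z (Pair {p, q}))"
proof -
  have "p \<noteq> q" using assms by (rule edge_distinct)
  then show ?thesis using assms by (auto simp: set_node_def insert_Diff_if)
qed

lemma set_node_outside: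
  assumes "k \<notin> I" "i \<in> V" "k \<noteq> Pair {i}"
  shows "set_node z i a s k = z k"
  using assms by (cases k) (auto simp: set_node_def Node_in_I Pair_in_I)

lemma set_node_relaxed:
  assumes z: "z \<in> relaxed" and i: "i \<in> V" "{i} \<notin> Lp" and a: "0 \<le> a" "a \<le> 1"
    and s_minus: "{i} \<in> Lm \<Longrightarrow> s \<le> a" and s_other: "{i} \<notin> Lm \<Longrightarrow> s = z (Pair {i})"
  shows "set_node z i a s \<in> relaxed"
proof -
  let ?y = "set_node z i a s"
  have "supported ?y"
    unfolding supported_def
  proof (intro allI impI)
    fix k assume k: "k \<notin> I"
    show "?y k = 0"
    proof (cases "k = Pair {i}")
      case True
      then have "{i} \<notin> Lm" using k Pair_in_I by auto
      then show ?thesis using True s_other z k by (simp add: set_node_loop relaxed_def supported_def)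
    next
      case False
      then show ?thesis using z k i by (simp add: set_node_outside relaxed_def supported_def)
    qed
  qed
  moreover have "\<forall>j\<in>V. 0 \<le> ?y (Node j) \<and> ?y (Node j) \<le> 1"
    using z a by (simp add: set_node_Node relaxed_def)
  moreover have "\<forall>j. {j} \<in> Lp \<longrightarrow> ?y (Pair {j}) \<ge> (?y (Node j))\<^sup>2"
    using z i by (auto simp: set_node_Node set_node_loop relaxed_def)
  moreover have "\<forall>j. {j} \<in> Lm \<longrightarrow> ?y (Pair {j}) \<le> ?y (Node j)"
    using z s_minus by (simp add: set_node_Node set_node_loop relaxed_def)
  moreover have "\<forall>p q. {p, q} \<in> E \<longrightarrow> ?y (Pair {p, q}) = ?y (Node p) * ?y (Node q)"
    using z edge_distinct loop_not_edge by (auto simp: set_node_Node set_node_edge relaxed_def)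
  ultimately show ?thesis by (simp add: relaxed_def)
qed

lemma split_at_node:
  assumes z: "z \<in> relaxed" and i: "i \<in> V"
    and s: "t * s1 + (1 - t) * s0 = z (Pair {i})" and t: "t = z (Node i)"
  shows "z = t *\<^sub>R set_node z i 1 s1 + (1 - t) *\<^sub>R set_node z i 0 s0"
proof
  fix k
  have edge: "z (Pair {p, q}) = z (Node p) * z (Node q)" if "{p, q} \<in> E" for p q
    using z that by (auto simp: relaxed_def)
  show "z k = (t *\<^sub>R set_node z i 1 s1 + (1 - t) *\<^sub>R set_node z i 0 s0) k"
  proof (cases "k \<in> Node ` UNIV \<or> k = Pair {i} \<or> (\<exists>e. k = Pair e \<and> e \<in> E \<and> i \<in> e)")
    case True
    then consider j where "k = Node j" | "k = Pair {i}" | j where "k = Pair {i, j}" "{i, j} \<in> E"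
      using edge_through[of _ i] by blast
    then show ?thesis
    proof cases
      case 1
      then show ?thesis using t by (auto simp: set_node_Node algebra_simps)
    next
      case 2
      then show ?thesis using s by (simp add: set_node_loop)
    next
      case (3 j)
      then show ?thesis using edge[of i j] t edge_distinct[of i j] by (simp add: set_node_edge algebra_simps)
    qed
  next
    case False
    then have "set_node z i a s k = z k" for a s
      by (cases k) (auto simp: set_node_def)
    then show ?thesis by (simp add: algebra_simps)
  qed
qed

lemma fractional_set_node:
  assumes "a = 0 \<or> a = 1"
  shows "fractional (set_node z i a s) \<subseteq> fractional z - {i}"
  using assms by (auto simp: fractional_def set_node_Node)

lemma finite_fractional: "finite (fractional z)"
  using finite_V by (simp add: fractional_def)

lemma split_fractional_node:
  assumes z: "z \<in> relaxed" and i: "i \<in> fractional z"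
  obtains t z1 z0 where "0 < t" "t < 1" "z = t *\<^sub>R z1 + (1 - t) *\<^sub>R z0"
    "z1 \<in> relaxed" "fractional z1 \<subset> fractional z"
    "z0 \<in> relaxed" "fractional z0 \<subset> fractional z"
proof -
  define t where "t = z (Node i)"
  \<comment> \<open>the loop value is split so that z_ii \<le> z_i survives on both sides\<close>
  define s1 where "s1 = (if {i} \<in> Lm then 1 + (z (Pair {i}) - t) else z (Pair {i}))"
  define s0 where "s0 = (if {i} \<in> Lm then z (Pair {i}) - t else z (Pair {i}))"
  have iV: "i \<in> V" and t: "0 < t" "t < 1" and iS: "i \<notin> S \<or> {i} \<in> Lm"
    using i by (auto simp: fractional_def t_def)
  have not_plus: "{i} \<notin> Lp" using iS plus_loop_in_S minus_loop_not_plus by blast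
  have minus: "{i} \<in> Lm \<Longrightarrow> z (Pair {i}) \<le> t"
    using z by (auto simp: relaxed_def t_def)
  have parts: "set_node z i a s \<in> relaxed \<and> fractional (set_node z i a s) \<subset> fractional z"
    if "a = 0 \<and> s = s0 \<or> a = 1 \<and> s = s1" for a s
  proof
    have "{i} \<in> Lm \<Longrightarrow> s \<le> a" "{i} \<notin> Lm \<Longrightarrow> s = z (Pair {i})"
      using that minus by (auto simp: s0_def s1_def)
    then show "set_node z i a s \<in> relaxed"
      using that z iV not_plus by (intro set_node_relaxed) auto
    show "fractional (set_node z i a s) \<subset> fractional z"
      using fractional_set_node[of a z i s] that i by blast
  qed
  have "t * s1 + (1 - t) * s0 = z (Pair {i})"
    by (simp add: s0_def s1_def algebra_simps)
  then have "z = t *\<^sub>R set_node z i 1 s1 + (1 - t) *\<^sub>R set_node z i 0 s0"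
    using z iV by (intro split_at_node) (simp_all add: t_def)
  with t show thesis
    using parts[of 1 s1] parts[of 0 s0] by (intro that) blast+
qed

lemma relaxed_subset_hull: "relaxed \<subseteq> convex hull (QP_points V E Lm Lp \<inter> relaxed_binary)"
proof (rule subsetI)
  fix z assume "z \<in> relaxed"
  then show "z \<in> convex hull (QP_points V E Lm Lp \<inter> relaxed_binary)"
  proof (induction "card (fractional z)" arbitrary: z rule: less_induct)
    case less
    show ?case
    proof (cases "fractional z = {}")
      case True
      then show ?thesis using relaxed_not_fractional[OF less.prems] by (blast intro: hull_inc)
    next
      case False
      then obtain i where "i \<in> fractional z" by blast
      with less.prems obtain t z1 z0 where t: "0 < t" "t < 1" and z: "z = t *\<^sub>R z1 + (1 - t) *\<^sub>R z0"
        and z1: "z1 \<in> relaxed" "fractional z1 \<subset> fractional z"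
        and z0: "z0 \<in> relaxed" "fractional z0 \<subset> fractional z"
        by (rule split_fractional_node)
      have "z1 \<in> convex hull (QP_points V E Lm Lp \<inter> relaxed_binary)"
        using psubset_card_mono[OF finite_fractional z1(2)] z1(1) by (rule less.hyps)
      moreover have "z0 \<in> convex hull (QP_points V E Lm Lp \<inter> relaxed_binary)"
        using psubset_card_mono[OF finite_fractional z0(2)] z0(1) by (rule less.hyps)
      ultimately show ?thesis
        unfolding z using t by (intro convexD[OF convex_convex_hull]) auto
    qed
  qed
qed

lemma QP_eq_hull_relaxed_binary: "QP V E Lm Lp = convex hull relaxed_binary"
proof -
  let ?P = "QP_points V E Lm Lp"
  have "convex hull ?P = convex hull (?P \<inter> relaxed_binary)"
    using QP_points_subset_relaxed relaxed_subset_hull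
    by (intro antisym convex_hull_subset) (auto intro: hull_inc)
  also have "\<dots> = convex hull relaxed_binary"
    using relaxed_subset_hull
    by (intro antisym convex_hull_subset) (auto simp: relaxed_binary_def intro: hull_inc)
  finally show ?thesis by (simp add: QP_eq_convex_hull)
qed

section \<open>The disjunctive lifting\<close>

text \<open>persp A k l u: coordinate k of the piece of relaxed_binary where the nodes of T
  are the indicator of A, homogenized by the scale l (Balas' perspective copy). Since S is
  stable, each edge has an end in T, so on a piece each edge variable is a constant or
  equals a node variable of S.\<close>

definition persp :: "'a set \<Rightarrow> 'a coord \<Rightarrow> real \<Rightarrow> ('a coord \<Rightarrow> real) \<Rightarrow> bool" where
  "persp A k l u = (case k of
    Node i \<Rightarrow> (if i \<in> S then 0 \<le> u (Node i) \<and> u (Node i) \<le> l else u (Node i) = (if i \<in> A then l else 0))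
  | Pair e \<Rightarrow> (if e \<in> Lp then (u (Node (the_elem e)))\<^sup>2 \<le> l * u (Pair e) \<and> 0 \<le> l \<and> 0 \<le> u (Pair e)
     else if e \<in> Lm then (if the_elem e \<in> S then u (Pair e) \<le> u (Node (the_elem e))
                          else u (Pair e) \<le> (if the_elem e \<in> A then l else 0))
     else if e \<inter> S = {} then u (Pair e) = (if e \<subseteq> A then l else 0)
     else u (Pair e) = (if the_elem (e - S) \<in> A then u (Node (the_elem (e \<inter> S))) else 0)))"

definition lifting :: "('a coord \<Rightarrow> real) \<Rightarrow> ('a set \<Rightarrow> real) \<Rightarrow> ('a set \<Rightarrow> 'a coord \<Rightarrow> real) \<Rightarrow> bool" where
  "lifting z l v \<longleftrightarrow> (\<forall>A\<in>Pow T. 0 \<le> l A \<and> (\<forall>k\<in>I. persp A k (l A) (v A))) \<and>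
    (\<forall>k\<in>I. z k = (\<Sum>A\<in>Pow T. v A k)) \<and> (\<Sum>A\<in>Pow T. l A) = 1"

definition lifted :: "('a coord \<Rightarrow> real) set" where
  "lifted = {z. supported z \<and> (\<exists>l v. lifting z l v)}"

lemma persp_Node:
  "persp A (Node i) l u \<longleftrightarrow>
    (if i \<in> S then 0 \<le> u (Node i) \<and> u (Node i) \<le> l else u (Node i) = (if i \<in> A then l else 0))"
  by (simp add: persp_def)

lemma persp_plus_loop:
  "{i} \<in> Lp \<Longrightarrow> persp A (Pair {i}) l u \<longleftrightarrow> (u (Node i))\<^sup>2 \<le> l * u (Pair {i}) \<and> 0 \<le> l \<and> 0 \<le> u (Pair {i})"
  by (simp add: persp_def)

lemma persp_minus_loop:
  "{i} \<in> Lm \<Longrightarrow> persp A (Pair {i}) l u \<longleftrightarrow>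
    (if i \<in> S then u (Pair {i}) \<le> u (Node i) else u (Pair {i}) \<le> (if i \<in> A then l else 0))"
  using minus_loop_not_plus by (simp add: persp_def)

lemma persp_edge_TT:
  "e \<in> E \<Longrightarrow> e \<inter> S = {} \<Longrightarrow> persp A (Pair e) l u \<longleftrightarrow> u (Pair e) = (if e \<subseteq> A then l else 0)"
  using edge_not_loop by (simp add: persp_def)

lemma persp_edge_ST:
  "e \<in> E \<Longrightarrow> the_elem (e \<inter> S) = a \<Longrightarrow> the_elem (e - S) = b \<Longrightarrow> e \<inter> S \<noteq> {} \<Longrightarrow>
    persp A (Pair e) l u \<longleftrightarrow> u (Pair e) = (if b \<in> A then u (Node a) else 0)"
  using edge_not_loop by (simp add: persp_def)

lemma relaxed_binary_persp:
  assumes z: "z \<in> relaxed_binary" and k: "k \<in> I"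
  shows "persp {j\<in>T. z (Node j) = 1} k 1 z"
proof -
  define B where "B = {j\<in>T. z (Node j) = 1}"
  have node_z: "\<And>i. i \<in> V \<Longrightarrow> 0 \<le> z (Node i) \<and> z (Node i) \<le> 1"
    and plus_z: "\<And>i. {i} \<in> Lp \<Longrightarrow> z (Pair {i}) \<ge> (z (Node i))\<^sup>2"
    and minus_z: "\<And>i. {i} \<in> Lm \<Longrightarrow> z (Pair {i}) \<le> z (Node i)"
    and edge_z: "\<And>p q. {p, q} \<in> E \<Longrightarrow> z (Pair {p, q}) = z (Node p) * z (Node q)"
    using z by (auto simp: relaxed_binary_def relaxed_def)
  have indicator: "z (Node j) = (if j \<in> B then 1 else 0)" if "j \<in> V" "j \<notin> S" for j
    using z that by (auto simp: relaxed_binary_def B_def T_def)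
  have "persp B k 1 z"
  proof (cases k)
    case (Node i)
    then have "i \<in> V" using k Node_in_I by simp
    then show ?thesis
      using node_z[of i] indicator[of i] Node by (simp add: persp_Node)
  next
    case (Pair e)
    then have "Pair e \<in> I" using k by simp
    then show ?thesis
    proof (cases rule: Pair_cases)
      case (plus i)
      then show ?thesis
        using Pair plus_z[of i] order_trans[OF zero_le_power2 plus_z[of i]] by (simp add: persp_plus_loop)
    next
      case (minus i)
      then show ?thesis
        using minus_z[of i] indicator[of i] Pair by (auto simp: persp_minus_loop)
    next
      case edge
      show ?thesis
        using edge(1)
      proof (cases rule: edge_cases)
        case (TT a b)
        then have "z (Pair e) = (if a \<in> B then 1 else 0) * (if b \<in> B then 1 else 0)"
          using edge_z[of a b] indicator[of a] indicator[of b] edge(1) by (simp add: T_def)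
        then show ?thesis
          using TT Pair edge(1) by (simp add: persp_edge_TT)
      next
        case (ST a b)
        then have "z (Pair e) = z (Node a) * (if b \<in> B then 1 else 0)"
          using edge_z[of a b] indicator[of b] edge(1) by (simp add: T_def)
        then show ?thesis
          using ST Pair edge(1) by (simp add: persp_edge_ST)
      qed
    qed
  qed
  then show ?thesis by (simp add: B_def)
qed

lemma relaxed_binary_subset_lifted: "relaxed_binary \<subseteq> lifted"
proof (rule subsetI)
  fix z assume z: "z \<in> relaxed_binary"
  define B where "B = {j\<in>T. z (Node j) = 1}"
  have B: "B \<in> Pow T" by (auto simp: B_def)
  have persp_zero: "persp A k 0 (\<lambda>_. 0)" for A k
    by (cases k) (simp_all add: persp_def)
  have "lifting z (\<lambda>A. if A = B then 1 else 0) (\<lambda>A. if A = B then z else (\<lambda>_. 0))"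
    unfolding lifting_def
  proof (intro conjI ballI)
    fix A k assume "A \<in> Pow T" "k \<in> I"
    then show "persp A k (if A = B then 1 else 0) (if A = B then z else (\<lambda>_. 0))"
      using relaxed_binary_persp[OF z] persp_zero by (cases "A = B") (simp_all add: B_def)
  next
    fix k
    show "z k = (\<Sum>A\<in>Pow T. (if A = B then z else (\<lambda>_. 0)) k)"
      using B finite_T by (simp add: if_distrib[of "\<lambda>f. f k"] sum.delta')
  qed (use B finite_T in \<open>simp_all add: sum.delta'\<close>)
  moreover have "supported z"
    using z by (simp add: relaxed_binary_def relaxed_def)
  ultimately show "z \<in> lifted"
    unfolding lifted_def by blast
qed

definition recession :: "('a coord \<Rightarrow> real) \<Rightarrow> bool" where
  "recession d \<longleftrightarrow> (\<forall>i\<in>V. d (Node i) = 0) \<and> (\<forall>e\<in>E. d (Pair e) = 0) \<and>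
     (\<forall>i. {i} \<in> Lp \<longrightarrow> 0 \<le> d (Pair {i})) \<and> (\<forall>i. {i} \<in> Lm \<longrightarrow> d (Pair {i}) \<le> 0)"

lemma recession_sum:
  assumes "\<And>A. A \<in> F \<Longrightarrow> recession (v A)"
  shows "recession (\<lambda>k. \<Sum>A\<in>F. v A k)"
  using assms unfolding recession_def by (auto intro!: sum_nonneg sum_nonpos)

lemma relaxed_binary_add_recession:
  assumes z: "z \<in> relaxed_binary" and d: "recession d" and c: "0 \<le> c"
  shows "(\<lambda>k. if k \<in> I then z k + c * d k else 0) \<in> relaxed_binary"
proof -
  have "z (Pair {i}) + c * d (Pair {i}) \<ge> (z (Node i))\<^sup>2" if "{i} \<in> Lp" for i
    using z d c that by (auto simp: relaxed_binary_def relaxed_def recession_def intro: add_increasing2)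
  moreover have "z (Pair {i}) + c * d (Pair {i}) \<le> z (Node i)" if "{i} \<in> Lm" for i
    using z d c that mult_left_mono[of "d (Pair {i})" 0 c]
    by (fastforce simp: relaxed_binary_def relaxed_def recession_def)
  ultimately show ?thesis
    using z d Node_in_I Pair_in_I loop_in_V
    by (auto simp: relaxed_binary_def relaxed_def recession_def supported_def)
qed

lemma persp_zero_scale_recession:
  assumes "\<And>k. k \<in> I \<Longrightarrow> persp A k 0 u"
  shows "recession u"
proof -
  have node: "u (Node i) = 0" if "i \<in> V" for i
    using assms[of "Node i"] that by (auto simp: Node_in_I persp_Node split: if_splits)
  have "u (Pair e) = 0" if e: "e \<in> E" for e
  proof -
    have persp_e: "persp A (Pair e) 0 u" using assms e Pair_in_I by blast
    show ?thesis using e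
    proof (cases rule: edge_cases)
      case (TT a b)
      then show ?thesis using persp_e persp_edge_TT[OF e] by simp
    next
      case (ST a b)
      then show ?thesis using persp_e persp_edge_ST[OF e] node S_subset_V by auto
    qed
  qed
  moreover have "0 \<le> u (Pair {i})" if "{i} \<in> Lp" for i
    using assms[of "Pair {i}"] that by (simp add: Pair_in_I persp_plus_loop)
  moreover have "u (Pair {i}) \<le> 0" if "{i} \<in> Lm" for i
    using assms[of "Pair {i}"] that node[of i] loop_in_V[of i]
    by (auto simp: Pair_in_I persp_minus_loop split: if_splits)
  ultimately show ?thesis using node by (simp add: recession_def)
qed

lemma persp_scaled_Node:
  assumes l: "0 < l" and persp_u: "\<And>k. k \<in> I \<Longrightarrow> persp A k l u" and j: "j \<in> V"
  shows "0 \<le> u (Node j) / l" "u (Node j) / l \<le> 1" "j \<in> T \<Longrightarrow> u (Node j) / l = (if j \<in> A then 1 else 0)"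
  using persp_u[of "Node j"] j l by (auto simp: Node_in_I persp_Node T_def split: if_splits)

lemma persp_scaled_edge:
  assumes l: "0 < l" and persp_u: "\<And>k. k \<in> I \<Longrightarrow> persp A k l u" and e: "{a, b} \<in> E"
  shows "u (Pair {a, b}) / l = (u (Node a) / l) * (u (Node b) / l)"
  using e
proof (cases rule: edge_cases)
  case (TT a' b')
  then have "u (Pair {a, b}) / l = (if {a, b} \<subseteq> A then 1 else 0)"
    using persp_u[of "Pair {a, b}"] e l by (simp add: Pair_in_I persp_edge_TT)
  moreover have "a \<in> T" "b \<in> T"
    using TT by (auto simp: doubleton_eq_iff)
  ultimately show ?thesis
    using persp_scaled_Node[OF l persp_u] by (simp add: T_def)
next
  case (ST a' b')
  then have "a' \<in> V" "b' \<in> T" using S_subset_V by auto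
  then have prod: "u (Pair {a, b}) / l = (u (Node a') / l) * (u (Node b') / l)"
    using ST persp_u[of "Pair {a, b}"] e l persp_scaled_Node[OF l persp_u, of b']
    by (simp add: Pair_in_I persp_edge_ST T_def)
  have "a = a' \<and> b = b' \<or> a = b' \<and> b = a'"
    using ST(1) by (simp add: doubleton_eq_iff)
  then show ?thesis
    using prod by (auto simp: mult.commute)
qed

lemma persp_scaled_in_relaxed_binary:
  assumes l: "0 < l" and persp_u: "\<And>k. k \<in> I \<Longrightarrow> persp A k l u"
  shows "(\<lambda>k. if k \<in> I then u k / l else 0) \<in> relaxed_binary"
proof -
  let ?q = "\<lambda>k. if k \<in> I then u k / l else 0"
  note node = persp_scaled_Node[OF l persp_u]
  have "(?q (Node i))\<^sup>2 \<le> ?q (Pair {i})" if "{i} \<in> Lp" for i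
  proof -
    have "(u (Node i))\<^sup>2 \<le> l * u (Pair {i})"
      using that persp_u[of "Pair {i}"] by (simp add: Pair_in_I persp_plus_loop)
    then show ?thesis
      using l that loop_in_V[of i]
      by (simp add: Node_in_I Pair_in_I power_divide divide_le_eq power2_eq_square mult.commute)
  qed
  moreover have "?q (Pair {i}) \<le> ?q (Node i)" if "{i} \<in> Lm" for i
  proof (cases "i \<in> S")
    case True
    then show ?thesis
      using that persp_u[of "Pair {i}"] loop_in_V[of i] l
      by (simp add: Node_in_I Pair_in_I persp_minus_loop divide_right_mono)
  next
    case False
    then have "u (Pair {i}) \<le> (if i \<in> A then 1 else 0) * l" "u (Node i) / l = (if i \<in> A then 1 else 0)"
      using that persp_u[of "Pair {i}"] node(3)[of i] loop_in_V[of i]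
      by (auto simp: Pair_in_I persp_minus_loop T_def)
    then show ?thesis
      using l that loop_in_V[of i] by (simp add: Node_in_I Pair_in_I pos_divide_le_eq)
  qed
  moreover have "?q (Pair {a, b}) = ?q (Node a) * ?q (Node b)" if "{a, b} \<in> E" for a b
    using that persp_scaled_edge[OF l persp_u that] edge_in_V[OF that] by (simp add: Node_in_I Pair_in_I)
  moreover have "0 \<le> ?q (Node i) \<and> ?q (Node i) \<le> 1" if "i \<in> V" for i
    using that node(1,2)[of i] by (simp add: Node_in_I)
  moreover have "?q (Node j) = 0 \<or> ?q (Node j) = 1" if "j \<in> T" for j
    using that node(3)[of j] by (simp add: Node_in_I T_def)
  moreover have "supported ?q"
    by (simp add: supported_def)
  ultimately show ?thesis
    unfolding relaxed_binary_def relaxed_def by blast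
qed

text \<open>Pieces with scale 0 contribute only a recession direction d, which is absorbed into
  one piece of positive scale.\<close>

lemma lifted_subset_hull: "lifted \<subseteq> convex hull relaxed_binary"
proof (rule subsetI)
  fix z assume "z \<in> lifted"
  then obtain l v where supp: "supported z" and "lifting z l v" by (auto simp: lifted_def)
  then have l: "\<And>A. A \<in> Pow T \<Longrightarrow> 0 \<le> l A"
    and persp_v: "\<And>A k. A \<in> Pow T \<Longrightarrow> k \<in> I \<Longrightarrow> persp A k (l A) (v A)"
    and z: "\<And>k. k \<in> I \<Longrightarrow> z k = (\<Sum>A\<in>Pow T. v A k)" and l_sum: "(\<Sum>A\<in>Pow T. l A) = 1"
    by (auto simp: lifting_def)
  define P where "P = {A\<in>Pow T. 0 < l A}"
  have P: "P \<subseteq> Pow T" "finite (Pow T)" "finite P"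
    using finite_T by (auto simp: P_def intro: finite_subset)
  have l_zero: "l A = 0" if "A \<in> Pow T - P" for A
    using that l[of A] by (auto simp: P_def)
  have l_P: "(\<Sum>A\<in>P. l A) = 1"
    using l_sum sum.mono_neutral_right[OF P(2,1), of l] l_zero by simp
  then obtain A0 where A0: "A0 \<in> P" by force
  define d where "d k = (\<Sum>A\<in>Pow T - P. v A k)" for k
  have d: "recession d"
    unfolding d_def
  proof (rule recession_sum)
    fix A assume A: "A \<in> Pow T - P"
    show "recession (v A)"
      using persp_v[of A] l_zero[OF A] A by (intro persp_zero_scale_recession[of A]) simp
  qed
  define q where "q A = (\<lambda>k. if k \<in> I then v A k / l A + (if A = A0 then 1 / l A else 0) * d k else 0)" for A
  have q: "q A \<in> relaxed_binary" if A: "A \<in> P" for A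
  proof -
    let ?y = "\<lambda>k. if k \<in> I then v A k / l A else 0"
    have "0 < l A" "A \<in> Pow T" using A by (auto simp: P_def)
    then have "(\<lambda>k. if k \<in> I then ?y k + (if A = A0 then 1 / l A else 0) * d k else 0) \<in> relaxed_binary"
      using persp_v by (intro relaxed_binary_add_recession[OF persp_scaled_in_relaxed_binary d]) auto
    moreover have "(\<lambda>k. if k \<in> I then ?y k + (if A = A0 then 1 / l A else 0) * d k else 0) = q A"
      by (simp add: q_def fun_eq_iff)
    ultimately show ?thesis by simp
  qed
  have "z = (\<Sum>A\<in>P. l A *\<^sub>R q A)"
  proof
    fix k
    show "z k = (\<Sum>A\<in>P. l A *\<^sub>R q A) k"
    proof (cases "k \<in> I")
      case False
      then show ?thesis using supp by (simp add: supported_def q_def)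
    next
      case True
      have "l A * q A k = v A k + (if A = A0 then d k else 0)" if "A \<in> P" for A
        using True that by (cases "A = A0") (simp_all add: q_def P_def field_simps)
      then have "(\<Sum>A\<in>P. l A *\<^sub>R q A) k = (\<Sum>A\<in>P. v A k) + (\<Sum>A\<in>P. if A = A0 then d k else 0)"
        by (simp add: sum.distrib)
      also have "\<dots> = (\<Sum>A\<in>P. v A k) + d k"
        using A0 P(3) by simp
      also have "\<dots> = z k"
        using z[OF True] sum.subset_diff[OF P(1,2), of "\<lambda>A. v A k"] by (simp add: d_def)
      finally show ?thesis ..
    qed
  qed
  also have "\<dots> \<in> convex hull relaxed_binary"
  proof (rule convex_sum[OF P(3) convex_convex_hull l_P])
    fix A assume "A \<in> P"
    then show "0 \<le> l A" "q A \<in> convex hull relaxed_binary"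
      using q[of A] by (simp_all add: P_def hull_inc)
  qed
  finally show "z \<in> convex hull relaxed_binary" .
qed

lemma persp_conic_comb:
  assumes h1: "persp A k l1 u1" and h2: "persp A k l2 u2" and a: "0 \<le> a" "0 \<le> b"
  shows "persp A k (a * l1 + b * l2) (\<lambda>k. a * u1 k + b * u2 k)"
proof (cases k)
  case (Node i)
  show ?thesis
  proof (cases "i \<in> S")
    case True
    then have "0 \<le> u1 (Node i)" "u1 (Node i) \<le> l1" "0 \<le> u2 (Node i)" "u2 (Node i) \<le> l2"
      using h1 h2 Node by (auto simp: persp_Node)
    then show ?thesis
      using True Node a conic_comb_mono[of 0 "u1 (Node i)" 0 "u2 (Node i)" a b]
        conic_comb_mono[of "u1 (Node i)" l1 "u2 (Node i)" l2 a b]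
      by (simp add: persp_Node)
  next
    case False
    then show ?thesis using h1 h2 Node by (simp add: persp_Node)
  qed
next
  case (Pair e)
  show ?thesis
  proof (cases "e \<in> Lp")
    case True
    then obtain i where "e = {i}" using loopE by blast
    then show ?thesis
      using h1 h2 a True Pair rotated_cone_conic_comb[of "u1 (Node i)" l1 "u1 (Pair {i})" "u2 (Node i)" l2 "u2 (Pair {i})" a b]
      by (auto simp: persp_plus_loop)
  next
    case not_plus: False
    show ?thesis
    proof (cases "e \<in> Lm")
      case True
      then obtain i where "e = {i}" using loopE by blast
      then show ?thesis
        using h1 h2 a True Pair
          conic_comb_mono[of "u1 (Pair {i})" "u1 (Node i)" "u2 (Pair {i})" "u2 (Node i)" a b]
          conic_comb_mono[of "u1 (Pair {i})" "if i \<in> A then l1 else 0" "u2 (Pair {i})" "if i \<in> A then l2 else 0" a b]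
        by (auto simp: persp_minus_loop split: if_splits)
    next
      case False
      then show ?thesis
        using h1 h2 not_plus Pair by (auto simp: persp_def algebra_simps split: if_splits)
    qed
  qed
qed

lemma convex_lifted: "convex lifted"
proof (rule convexI)
  fix z1 z2 and a b :: real
  assume "z1 \<in> lifted" "z2 \<in> lifted" and ab: "0 \<le> a" "0 \<le> b" "a + b = 1"
  then obtain l1 v1 l2 v2 where z1: "supported z1" "lifting z1 l1 v1"
    and z2: "supported z2" "lifting z2 l2 v2"
    by (auto simp: lifted_def)
  have "lifting (a *\<^sub>R z1 + b *\<^sub>R z2) (\<lambda>A. a * l1 A + b * l2 A) (\<lambda>A k. a * v1 A k + b * v2 A k)"
    unfolding lifting_def
  proof (intro conjI ballI)
    fix A assume "A \<in> Pow T"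
    then show "0 \<le> a * l1 A + b * l2 A"
      using z1 z2 ab by (simp add: lifting_def)
  next
    fix A k assume "A \<in> Pow T" "k \<in> I"
    then show "persp A k (a * l1 A + b * l2 A) (\<lambda>k. a * v1 A k + b * v2 A k)"
      using z1 z2 ab by (intro persp_conic_comb) (auto simp: lifting_def)
  next
    fix k assume "k \<in> I"
    then show "(a *\<^sub>R z1 + b *\<^sub>R z2) k = (\<Sum>A\<in>Pow T. a * v1 A k + b * v2 A k)"
      using z1 z2 by (simp add: lifting_def sum.distrib sum_distrib_left)
  next
    show "(\<Sum>A\<in>Pow T. a * l1 A + b * l2 A) = 1"
      using z1 z2 ab by (simp add: lifting_def sum.distrib sum_distrib_left[symmetric])
  qed
  moreover have "supported (a *\<^sub>R z1 + b *\<^sub>R z2)"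
    using z1 z2 by (simp add: supported_def)
  ultimately show "a *\<^sub>R z1 + b *\<^sub>R z2 \<in> lifted"
    by (auto simp: lifted_def)
qed

lemma QP_eq_lifted: "QP V E Lm Lp = lifted"
proof -
  have "convex hull relaxed_binary \<subseteq> lifted"
    using relaxed_binary_subset_lifted convex_lifted by (rule hull_minimal)
  then show ?thesis
    using lifted_subset_hull by (simp add: QP_eq_hull_relaxed_binary)
qed

lemma persp_cong:
  assumes "k \<in> I" "\<And>k'. k' \<in> I \<Longrightarrow> u k' = u' k'"
  shows "persp A k l u \<longleftrightarrow> persp A k l u'"
proof (cases k)
  case (Node i)
  then show ?thesis using assms by (simp add: persp_Node)
next
  case (Pair e)
  then have "Pair e \<in> I" using assms(1) by simp
  then show ?thesis
  proof (cases rule: Pair_cases)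
    case (plus i)
    then show ?thesis using assms Pair by (simp add: persp_plus_loop Pair_in_I Node_in_I)
  next
    case (minus i)
    then show ?thesis using assms Pair by (simp add: persp_minus_loop Pair_in_I Node_in_I)
  next
    case edge
    show ?thesis using edge(1)
    proof (cases rule: edge_cases)
      case (TT a b)
      then show ?thesis using assms Pair edge by (simp add: persp_edge_TT)
    next
      case (ST a b)
      then have "Node a \<in> I" using S_subset_V Node_in_I by blast
      then show ?thesis using ST assms Pair edge by (simp add: persp_edge_ST)
    qed
  qed
qed

lemma lifting_cong:
  assumes "lifting z l v"
    and "\<And>A. A \<in> Pow T \<Longrightarrow> l' A = l A" "\<And>A k. A \<in> Pow T \<Longrightarrow> k \<in> I \<Longrightarrow> v' A k = v A k"
  shows "lifting z l' v'"
proof -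
  have "persp A k (l' A) (v' A) \<longleftrightarrow> persp A k (l A) (v A)" if "A \<in> Pow T" "k \<in> I" for A k
    using that assms(2,3) persp_cong[of k "v' A" "v A"] by simp
  moreover have "(\<Sum>A\<in>Pow T. v' A k) = (\<Sum>A\<in>Pow T. v A k)" if "k \<in> I" for k
    using that assms(3) by (intro sum.cong) auto
  moreover have "(\<Sum>A\<in>Pow T. l' A) = (\<Sum>A\<in>Pow T. l A)"
    using assms(2) by (intro sum.cong) auto
  ultimately show ?thesis
    using assms(1,2) unfolding lifting_def by auto
qed

section \<open>Encoding by second-order cone constraints\<close>

definition slots :: "('a set \<times> 'a coord option) set" where
  "slots = Pow T \<times> insert None (Some ` I)"

definition slot :: "'a set \<times> 'a coord option \<Rightarrow> nat" where
  "slot = (SOME h. bij_betw h slots {0..<card slots})"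

lemma finite_slots: "finite slots"
  using finite_T finite_I by (simp add: slots_def)

lemma card_slots: "card slots = 2 ^ card T * (card I + 1)"
  using finite_T finite_I
  by (simp add: slots_def card_cartesian_product card_Pow card_image card_insert_if)

lemma bij_slot: "bij_betw slot slots {0..<card slots}"
  unfolding slot_def using ex_bij_betw_finite_nat[OF finite_slots] by (rule someI_ex)

definition scale_var :: "'a set \<Rightarrow> 'a coord affform" where
  "scale_var A = aff_aux (slot (A, None))"

definition copy_var :: "'a set \<Rightarrow> 'a coord \<Rightarrow> 'a coord affform" where
  "copy_var A k = aff_aux (slot (A, Some k))"

text \<open>RSOC [g] u v states g^2 \<le> 2 u v, hence the factor 1/2 for plus loops.\<close>

definition persp_constrs :: "'a set \<Rightarrow> 'a coord \<Rightarrow> 'a coord soc_constr list" where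
  "persp_constrs A k = (let u = copy_var A; l = scale_var A in case k of
    Node i \<Rightarrow> (if i \<in> S then le_constrs (aff_const 0) (u k) @ le_constrs (u k) l
               else eq_constrs (u k) (aff_scale (if i \<in> A then 1 else 0) l))
  | Pair e \<Rightarrow> (if e \<in> Lp then [RSOC [u (Node (the_elem e))] l (aff_scale (1/2) (u k))]
     else if e \<in> Lm then (if the_elem e \<in> S then le_constrs (u k) (u (Node (the_elem e)))
                          else le_constrs (u k) (aff_scale (if the_elem e \<in> A then 1 else 0) l))
     else if e \<inter> S = {} then eq_constrs (u k) (aff_scale (if e \<subseteq> A then 1 else 0) l)
     else eq_constrs (u k)
       (aff_scale (if the_elem (e - S) \<in> A then 1 else 0) (u (Node (the_elem (e \<inter> S)))))))"

definition piece_constrs :: "'a coord soc_constr list" where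
  "piece_constrs = concat (map (\<lambda>A. LinIneq (scale_var A) # concat (map (persp_constrs A) (enum_list I)))
    (enum_list (Pow T)))"

definition coupling_constrs :: "'a coord soc_constr list" where
  "coupling_constrs =
    concat (map (\<lambda>k. eq_constrs (aff_var k) (aff_sum (\<lambda>A. copy_var A k) (Pow T))) (enum_list I))"

definition scale_sum_constrs :: "'a coord soc_constr list" where
  "scale_sum_constrs = eq_constrs (aff_sum scale_var (Pow T)) (aff_const 1)"

definition constraints :: "'a coord soc_constr list" where
  "constraints = piece_constrs @ coupling_constrs @ scale_sum_constrs"

lemma set_enum_list_I: "set (enum_list I) = I" and length_enum_list_I: "length (enum_list I) = card I"
  using enum_list[OF finite_I] by simp_all

lemma set_enum_list_Pow: "set (enum_list (Pow T)) = Pow T"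
  and length_enum_list_Pow: "length (enum_list (Pow T)) = 2 ^ card T"
  using enum_list[of "Pow T"] finite_T by (simp_all add: card_Pow)

lemma length_constraints: "length constraints \<le> 2 ^ card T * (1 + 2 * card I) + 2 * card I + 2"
proof -
  have "length (persp_constrs A k) \<le> 2" for A k
    by (cases k) (simp_all add: persp_constrs_def eq_constrs_def le_constrs_def Let_def)
  then have "length (concat (map (persp_constrs A) (enum_list I))) \<le> card I * 2" for A
    using sum_list_le_const[of "enum_list I" "length \<circ> persp_constrs A" 2]
    by (simp add: length_concat length_enum_list_I)
  then have "length piece_constrs \<le> 2 ^ card T * (1 + 2 * card I)"
    using sum_list_le_const[of "enum_list (Pow T)" _ "1 + 2 * card I"]
    by (simp add: piece_constrs_def length_concat length_enum_list_Pow mult.commute)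
  moreover have "length coupling_constrs = 2 * card I"
    by (simp add: coupling_constrs_def length_concat eq_constrs_def le_constrs_def comp_def
        sum_list_triv length_enum_list_I)
  ultimately show ?thesis
    by (simp add: constraints_def scale_sum_constrs_def eq_constrs_def le_constrs_def)
qed

abbreviation holds :: "'a coord soc_constr list \<Rightarrow> ('a coord \<Rightarrow> real) \<Rightarrow> (nat \<Rightarrow> real) \<Rightarrow> bool" where
  "holds cs x w \<equiv> \<forall>c\<in>set cs. soc_sat I (card slots) c x w"

lemma slot_less: "x \<in> slots \<Longrightarrow> slot x < card slots"
  using bij_slot by (auto simp: bij_betw_def)

lemma aff_eval_scale_var:
  "A \<in> Pow T \<Longrightarrow> aff_eval I (card slots) (scale_var A) x w = w (slot (A, None))"
  unfolding scale_var_def by (rule aff_eval_aux, rule slot_less) (simp add: slots_def)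

lemma aff_eval_copy_var:
  "A \<in> Pow T \<Longrightarrow> k \<in> I \<Longrightarrow> aff_eval I (card slots) (copy_var A k) x w = w (slot (A, Some k))"
  unfolding copy_var_def by (rule aff_eval_aux, rule slot_less) (simp add: slots_def)

lemma holds_persp_constrs:
  assumes A: "A \<in> Pow T" and k: "k \<in> I"
  shows "holds (persp_constrs A k) x w \<longleftrightarrow> persp A k (w (slot (A, None))) (\<lambda>k. w (slot (A, Some k)))"
proof (cases k)
  case (Node i)
  then show ?thesis
    using A k by (simp add: persp_constrs_def Let_def persp_Node aff_eval_scale_var aff_eval_copy_var ball_Un)
next
  case (Pair e)
  note simps = persp_constrs_def Let_def aff_eval_scale_var aff_eval_copy_var Node_in_I
  have "Pair e \<in> I" using k Pair by simp
  then show ?thesis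
  proof (cases rule: Pair_cases)
    case (plus i)
    then show ?thesis using A k Pair by (simp add: simps persp_plus_loop)
  next
    case (minus i)
    then show ?thesis using A k Pair by (simp add: simps persp_minus_loop)
  next
    case edge
    show ?thesis using edge(1)
    proof (cases rule: edge_cases)
      case (TT a b)
      then show ?thesis using A k Pair edge by (simp add: simps persp_edge_TT)
    next
      case (ST a b)
      then have "a \<in> V" using S_subset_V by blast
      then show ?thesis using ST A k Pair edge by (simp add: simps persp_edge_ST)
    qed
  qed
qed

lemma holds_piece_constrs:
  "holds piece_constrs x w \<longleftrightarrow>
    (\<forall>A\<in>Pow T. 0 \<le> w (slot (A, None)) \<and> (\<forall>k\<in>I. persp A k (w (slot (A, None))) (\<lambda>k. w (slot (A, Some k)))))"
proof -
  have "holds piece_constrs x w \<longleftrightarrow>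
      (\<forall>A\<in>Pow T. soc_sat I (card slots) (LinIneq (scale_var A)) x w \<and> (\<forall>k\<in>I. holds (persp_constrs A k) x w))"
    by (auto simp: piece_constrs_def set_enum_list_I set_enum_list_Pow)
  also have "\<dots> \<longleftrightarrow>
      (\<forall>A\<in>Pow T. 0 \<le> w (slot (A, None)) \<and> (\<forall>k\<in>I. persp A k (w (slot (A, None))) (\<lambda>k. w (slot (A, Some k)))))"
    by (intro ball_cong refl) (simp add: aff_eval_scale_var holds_persp_constrs)
  finally show ?thesis .
qed

lemma holds_coupling_constrs:
  "holds coupling_constrs x w \<longleftrightarrow> (\<forall>k\<in>I. x k = (\<Sum>A\<in>Pow T. w (slot (A, Some k))))"
proof -
  have "holds coupling_constrs x w \<longleftrightarrow>
      (\<forall>k\<in>I. holds (eq_constrs (aff_var k) (aff_sum (\<lambda>A. copy_var A k) (Pow T))) x w)"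
    by (auto simp: coupling_constrs_def set_enum_list_I)
  also have "\<dots> \<longleftrightarrow> (\<forall>k\<in>I. x k = (\<Sum>A\<in>Pow T. w (slot (A, Some k))))"
    using finite_I by (intro ball_cong refl) (simp add: aff_eval_var aff_eval_copy_var)
  finally show ?thesis .
qed

lemma holds_scale_sum_constrs: "holds scale_sum_constrs x w \<longleftrightarrow> (\<Sum>A\<in>Pow T. w (slot (A, None))) = 1"
  by (simp add: scale_sum_constrs_def aff_eval_scale_var)

lemma holds_constraints:
  "holds constraints x w \<longleftrightarrow> lifting x (\<lambda>A. w (slot (A, None))) (\<lambda>A k. w (slot (A, Some k)))"
  unfolding constraints_def set_append ball_Un holds_piece_constrs holds_coupling_constrs
    holds_scale_sum_constrs lifting_def ..

definition decode :: "('a set \<Rightarrow> real) \<Rightarrow> ('a set \<Rightarrow> 'a coord \<Rightarrow> real) \<Rightarrow> nat \<Rightarrow> real" where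
  "decode l v j = (case inv_into slots slot j of (A, None) \<Rightarrow> l A | (A, Some k) \<Rightarrow> v A k)"

lemma decode_slot:
  "x \<in> slots \<Longrightarrow> decode l v (slot x) = (case x of (A, None) \<Rightarrow> l A | (A, Some k) \<Rightarrow> v A k)"
  using bij_slot by (simp add: decode_def bij_betw_def)

lemma QP_eq_constraints: "QP V E Lm Lp = {x. (\<forall>k. k \<notin> I \<longrightarrow> x k = 0) \<and> (\<exists>w. holds constraints x w)}"
proof -
  have "(\<exists>l v. lifting x l v) \<longleftrightarrow> (\<exists>w. holds constraints x w)" for x
  proof
    assume "\<exists>l v. lifting x l v"
    then obtain l v where "lifting x l v" by blast
    then have "lifting x (\<lambda>A. decode l v (slot (A, None))) (\<lambda>A k. decode l v (slot (A, Some k)))"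
      by (rule lifting_cong) (simp_all add: decode_slot slots_def)
    then show "\<exists>w. holds constraints x w"
      using holds_constraints by blast
  qed (use holds_constraints in blast)
  then show ?thesis
    unfolding QP_eq_lifted lifted_def supported_def by blast
qed

lemma soc_rep_QP:
  "soc_rep I ((2 ^ card T + 1) * (card I + 1)) (2 * (2 ^ card T + 1) * (card I + 1)) (QP V E Lm Lp)"
proof -
  have "soc_rep I (card I + card slots) (2 ^ card T * (1 + 2 * card I) + 2 * card I + 2) (QP V E Lm Lp)"
    unfolding soc_rep_def using QP_eq_constraints length_constraints by blast
  then show ?thesis
    by (rule soc_rep_mono) (simp_all add: card_slots algebra_simps)
qed

end

theorem soc_rep_QP_stable_set:
  assumes "graph_with_loops V E Lm Lp" "stable_set V E S" "{i\<in>V. {i, i} \<in> Lp} \<subseteq> S"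
  defines "N \<equiv> 2 * (2 ^ card (V - S) + 1) * (card V + 1)\<^sup>2"
  shows "soc_rep (QP_index V E Lm Lp) N N (QP V E Lm Lp)"
proof -
  interpret qp_graph V E Lm Lp S
    using assms(1-3) by unfold_locales
  have "card I + 1 \<le> (card V + 1)\<^sup>2"
    using card_QP_index_le[OF assms(1)] by (simp add: I_def power2_eq_square)
  then have "2 * ((2 ^ card T + 1) * (card I + 1)) \<le> 2 * ((2 ^ card T + 1) * (card V + 1)\<^sup>2)"
    by (intro mult_le_mono2)
  then have nc: "2 * (2 ^ card T + 1) * (card I + 1) \<le> N"
    unfolding N_def T_def by (simp only: mult.assoc)
  then have nv: "(2 ^ card T + 1) * (card I + 1) \<le> N"
    by linarith
  show ?thesis
    using soc_rep_mono[OF soc_rep_QP nv nc] by (simp add: I_def)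
qed

lemma two_pow_le_one_plus_pow:
  fixes c x :: real
  assumes "0 < c" "0 \<le> x" "real k \<le> c * ln x"
  shows "2 ^ k \<le> 1 + x ^ nat \<lceil>c * ln 2\<rceil>"
proof (cases "k = 0")
  case False
  then have "0 < c * ln x"
    using assms(3) by linarith
  then have "0 < ln x"
    using assms(1) by (simp add: zero_less_mult_iff)
  have x: "0 < x"
  proof (rule ccontr)
    assume "\<not> 0 < x"
    then have "x = 0" using assms(2) by simp
    then show False using \<open>0 < ln x\<close> by simp
  qed
  have "ln (2 ^ k) = real k * ln 2" by (simp add: ln_realpow)
  also have "\<dots> \<le> c * ln 2 * ln x"
    using assms(3) by (simp add: mult.commute mult_left_mono)
  also have "\<dots> \<le> real (nat \<lceil>c * ln 2\<rceil>) * ln x"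
    using \<open>0 < ln x\<close> by (intro mult_right_mono) (auto intro: real_nat_ceiling_ge)
  also have "\<dots> = ln (x ^ nat \<lceil>c * ln 2\<rceil>)"
    using x by (simp add: ln_realpow)
  finally have "2 ^ k \<le> x ^ nat \<lceil>c * ln 2\<rceil>"
    using x by simp
  then show ?thesis by simp
qed (use assms(2) in simp)

theorem proposition10:
  fixes c :: real
  assumes "c > 0"
  shows "\<exists>P :: real poly. \<forall>(V :: 'a set) E Lm Lp S.
    graph_with_loops V E Lm Lp \<and> stable_set V E S \<and>
    {i\<in>V. {i, i} \<in> Lp} \<subseteq> S \<and>
    real (card (V - S)) \<le> c * ln (real (card V))
    \<longrightarrow> (\<exists>nv nc. soc_rep (QP_index V E Lm Lp) nv nc (QP V E Lm Lp) \<and>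
                 real nv \<le> poly P (real (card V)) \<and> real nc \<le> poly P (real (card V)))"
proof -
  define K where "K = nat \<lceil>c * ln 2\<rceil>"
  define P :: "real poly" where "P = smult 2 (([:2:] + monom 1 K) * [:1, 1:] ^ 2)"
  have poly_P: "poly P x = 2 * (2 + x ^ K) * (1 + x)\<^sup>2" for x
    by (simp add: P_def poly_monom)
  show ?thesis
  proof (intro exI[of _ P] allI impI, elim conjE)
    fix V :: "'a set" and E Lm Lp S
    assume G: "graph_with_loops V E Lm Lp" "stable_set V E S" "{i\<in>V. {i, i} \<in> Lp} \<subseteq> S"
      and small: "real (card (V - S)) \<le> c * ln (real (card V))"
    let ?N = "2 * (2 ^ card (V - S) + 1) * (card V + 1)\<^sup>2"
    have "(2::real) ^ card (V - S) + 1 \<le> 2 + real (card V) ^ K"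
      using two_pow_le_one_plus_pow[OF assms _ small] by (simp add: K_def)
    then have "2 * ((2::real) ^ card (V - S) + 1) * (real (card V) + 1)\<^sup>2
        \<le> 2 * (2 + real (card V) ^ K) * (real (card V) + 1)\<^sup>2"
      by (intro mult_right_mono mult_left_mono) simp_all
    then have "real ?N \<le> 2 * (2 + real (card V) ^ K) * (real (card V) + 1)\<^sup>2"
      by (simp only: of_nat_mult of_nat_add of_nat_power of_nat_numeral of_nat_1)
    also have "\<dots> = poly P (real (card V))"
      by (simp add: poly_P add.commute)
    finally have "real ?N \<le> poly P (real (card V))" .
    then show "\<exists>nv nc. soc_rep (QP_index V E Lm Lp) nv nc (QP V E Lm Lp) \<and>
        real nv \<le> poly P (real (card V)) \<and> real nc \<le> poly P (real (card V))"
      using soc_rep_QP_stable_set[OF G] by blast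
  qed
qed

end
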